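(* Let $\mathbf G$ be a torsion-free group, and let $x,y,z\in G$ be such that $x,y\in O_{\mathbf G}(z)$, $x\to y$ in $\vec{\mathcal G}^\pm(\mathbf G)$, and $y\notin\{x,x^{-1}\}$. Let $\mathbf H$ be a group and $\varphi:G\to H$ an isomorphism from $\mathcal G^\pm(\mathbf G)$ to $\mathcal G^\pm(\mathbf H)$. Then $\varphi(x)\to\varphi(y)$ in $\vec{\mathcal G}^\pm(\mathbf H)$ if and only if $\varphi(O_{\mathbf G}(z))=O_{\mathbf H}(\varphi(z))$.
   Context: For a group $\mathbf G$, the directed $Z^\pm$-power graph $\vec{\mathcal G}^\pm(\mathbf G)$ has vertex set $G$ and an arc $x\to y$ for distinct $x,y$ iff $y=x^n$ for some $n\in\mathbb Z\setminus\{0\}$; its underlying simple graph is the $Z^\pm$-power graph $\mathcal G^\pm(\mathbf G)$. For $z\in G$, $O_{\mathbf G}(z)=\{y\in G\setminus\{z^{-1}\}\mid z\to y\text{ in }\vec{\mathcal G}^\pm(\mathbf G)\}$. *)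

theory Defs
  imports "HOL-Algebra.Group"
begin

definition zpow_arc :: "('a, 'b) monoid_scheme \<Rightarrow> 'a \<Rightarrow> 'a \<Rightarrow> bool" where
  "zpow_arc G x y \<longleftrightarrow> x \<in> carrier G \<and> y \<in> carrier G \<and> x \<noteq> y \<and>
     (\<exists>n::int. n \<noteq> 0 \<and> y = x [^]\<^bsub>G\<^esub> n)"

definition zpow_adj :: "('a, 'b) monoid_scheme \<Rightarrow> 'a \<Rightarrow> 'a \<Rightarrow> bool" where
  "zpow_adj G x y \<longleftrightarrow> zpow_arc G x y \<or> zpow_arc G y x"

definition O_set :: "('a, 'b) monoid_scheme \<Rightarrow> 'a \<Rightarrow> 'a set" where
  "O_set G z = {y \<in> carrier G. y \<noteq> inv\<^bsub>G\<^esub> z \<and> zpow_arc G z y}"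

definition torsion_free :: "('a, 'b) monoid_scheme \<Rightarrow> bool" where
  "torsion_free G \<longleftrightarrow> (\<forall>x\<in>carrier G. \<forall>n::nat. n > 0 \<longrightarrow> x [^]\<^bsub>G\<^esub> n = \<one>\<^bsub>G\<^esub> \<longrightarrow> x = \<one>\<^bsub>G\<^esub>)"

definition zpow_graph_iso :: "('a, 'b) monoid_scheme \<Rightarrow> ('c, 'd) monoid_scheme \<Rightarrow> ('a \<Rightarrow> 'c) \<Rightarrow> bool" where
  "zpow_graph_iso G H \<phi> \<longleftrightarrow> bij_betw \<phi> (carrier G) (carrier H) \<and>
     (\<forall>u\<in>carrier G. \<forall>v\<in>carrier G. zpow_adj G u v \<longleftrightarrow> zpow_adj H (\<phi> u) (\<phi> v))"

end

theory Submission
  imports Defs "HOL-Algebra.Multiplicative_Group"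
begin

(*
  In a torsion-free group, O(a) consists of the proper powers a^n, |n| \<ge> 2, of a, and these
  arcs are visible in the undirected graph through closed neighbourhoods: if a \<rightarrow> b and a \<rightarrow> c
  then N[a] is not covered by N[b] \<union> N[c], whereas for a chain a \<rightarrow> b \<rightarrow> c it is N[b] that is
  covered by N[a] \<union> N[c]. A graph isomorphism preserves such coverings, so it maps proper-power
  pairs to proper-power pairs, possibly reversed, and the orientations are coherent: a correct
  z \<rightarrow> x forces all of O(z) to be mapped onto O(\<phi> z), and a correct x \<rightarrow> y forces a correct z \<rightarrow> x.
  Conversely, if \<phi> maps O(z) onto O(\<phi> z) but reverses x \<rightarrow> y, then N[\<phi> x] \<inter> O(\<phi> z) - N[\<phi> y]
  is finite (its elements are powers of \<phi> z with exponents dividing that of \<phi> x), whereas its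
  preimage N[x] \<inter> O(z) - N[y] contains the infinitely many x^(k|n|+1), where y = x^n.
  Torsion-freeness passes from G to H because in both groups the identity is the only possible
  isolated vertex, and it is isolated exactly when the group is torsion-free.
*)

definition proper_power :: "('a, 'b) monoid_scheme \<Rightarrow> 'a \<Rightarrow> 'a \<Rightarrow> bool" where
  "proper_power K a b \<longleftrightarrow>
     a \<in> carrier K \<and> a \<noteq> \<one>\<^bsub>K\<^esub> \<and> (\<exists>n::int. \<bar>n\<bar> \<ge> 2 \<and> b = a [^]\<^bsub>K\<^esub> n)"

definition closed_nbhd :: "('a, 'b) monoid_scheme \<Rightarrow> 'a \<Rightarrow> 'a set" where
  "closed_nbhd K a = insert a {b. zpow_adj K a b}"

lemma closed_nbhd_sym: "b \<in> closed_nbhd K a \<longleftrightarrow> a \<in> closed_nbhd K b"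
  unfolding closed_nbhd_def zpow_adj_def by auto

lemma closed_nbhd_subset_carrier: "a \<in> carrier K \<Longrightarrow> closed_nbhd K a \<subseteq> carrier K"
  unfolding closed_nbhd_def zpow_adj_def zpow_arc_def by auto

context group
begin

lemma zpow_arc_trans_closed_nbhd:
  assumes "zpow_arc G a b" "zpow_arc G b c"
  shows "c \<in> closed_nbhd G a"
proof -
  obtain m n :: int where a: "a \<in> carrier G" and "m \<noteq> 0" "b = a [^] m" "n \<noteq> 0" "c = b [^] n"
    using assms unfolding zpow_arc_def by auto
  then have "m * n \<noteq> 0" "c = a [^] (m * n)" by (simp_all add: int_pow_pow)
  then show ?thesis
    using a unfolding closed_nbhd_def zpow_adj_def zpow_arc_def by (auto intro!: exI[of _ "m * n"])
qed

lemma closed_nbhd_subset_Un_of_zpow_arcs: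
  assumes "zpow_arc G a b" "zpow_arc G b c"
  shows "closed_nbhd G b \<subseteq> closed_nbhd G a \<union> closed_nbhd G c"
proof
  fix e assume "e \<in> closed_nbhd G b"
  then consider "e = b" | "zpow_arc G b e" | "zpow_arc G e b"
    unfolding closed_nbhd_def zpow_adj_def by blast
  then show "e \<in> closed_nbhd G a \<union> closed_nbhd G c"
  proof cases
    case 1
    then show ?thesis using assms(1) unfolding closed_nbhd_def zpow_adj_def by blast
  next
    case 2
    then show ?thesis using zpow_arc_trans_closed_nbhd[OF assms(1)] by blast
  next
    case 3
    then have "c \<in> closed_nbhd G e" using zpow_arc_trans_closed_nbhd assms(2) by blast
    then show ?thesis by (simp add: closed_nbhd_sym)
  qed
qed

lemma nonzero_powers_inv:
  assumes "a \<in> carrier G"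
  shows "(\<exists>n::int. n \<noteq> 0 \<and> c = inv a [^] n) \<longleftrightarrow> (\<exists>n::int. n \<noteq> 0 \<and> c = a [^] n)"
proof -
  have "inv a [^] n = a [^] (- n)" for n :: int
    using assms by (simp add: int_pow_inv int_pow_neg)
  then show ?thesis by (metis minus_minus neg_equal_0_iff_equal)
qed

lemma inv_in_nonzero_powers_iff:
  assumes "a \<in> carrier G" "c \<in> carrier G"
  shows "(\<exists>n::int. n \<noteq> 0 \<and> inv a = c [^] n) \<longleftrightarrow> (\<exists>n::int. n \<noteq> 0 \<and> a = c [^] n)"
proof -
  have "inv a = c [^] n \<longleftrightarrow> a = c [^] (- n)" for n :: int
    using assms by (metis inv_inv int_pow_closed int_pow_neg)
  then show ?thesis by (metis minus_minus neg_equal_0_iff_equal)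
qed

lemma closed_nbhd_inv:
  assumes a: "a \<in> carrier G"
  shows "closed_nbhd G (inv a) = closed_nbhd G a"
proof -
  define linked where "linked c \<longleftrightarrow> c \<in> carrier G \<and>
    ((\<exists>n::int. n \<noteq> 0 \<and> c = a [^] n) \<or> (\<exists>n::int. n \<noteq> 0 \<and> a = c [^] n))" for c
  have "closed_nbhd G b = {a, inv a} \<union> Collect linked" if "b = a \<or> b = inv a" for b
  proof -
    have "a = a [^] (1::int)" "inv a = a [^] (-1::int)"
      using a by (simp_all add: int_pow_neg)
    then have "linked a" "linked (inv a)"
      using a unfolding linked_def by (metis one_neq_zero, metis inv_closed neg_equal_0_iff_equal one_neq_zero)
    moreover have "zpow_adj G b c \<longleftrightarrow> c \<noteq> b \<and> linked c" for c
    proof (cases "b = a")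
      case True
      then show ?thesis using a unfolding zpow_adj_def zpow_arc_def linked_def by auto
    next
      case False
      then show ?thesis
        using that a nonzero_powers_inv[OF a, of c] inv_in_nonzero_powers_iff[OF a, of c]
        unfolding zpow_adj_def zpow_arc_def linked_def by auto
    qed
    ultimately show ?thesis
      using that unfolding closed_nbhd_def by blast
  qed
  then show ?thesis by simp
qed

lemma torsion_free_iff_one_isolated: "torsion_free G \<longleftrightarrow> (\<forall>b. \<not> zpow_adj G \<one> b)"
proof
  assume tf: "torsion_free G"
  show "\<forall>b. \<not> zpow_adj G \<one> b"
  proof (intro allI notI)
    fix b assume "zpow_adj G \<one> b"
    then obtain n :: int where b: "b \<in> carrier G" "b \<noteq> \<one>" and "n \<noteq> 0" "b [^] n = \<one>"
      unfolding zpow_adj_def zpow_arc_def by auto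
    then have "ord b \<noteq> 0" using int_pow_eq_id[OF b(1), of n] by auto
    then show False using ord_eq_0[OF b(1)] tf b unfolding torsion_free_def by auto
  qed
next
  assume isolated: "\<forall>b. \<not> zpow_adj G \<one> b"
  show "torsion_free G"
    unfolding torsion_free_def
  proof (intro ballI allI impI)
    fix x and n :: nat assume "x \<in> carrier G" "n > 0" "x [^] n = \<one>"
    then have "x \<noteq> \<one> \<Longrightarrow> zpow_arc G x \<one>"
      unfolding zpow_arc_def by (auto intro!: exI[of _ "int n"] simp: int_pow_int)
    then show "x = \<one>" using isolated unfolding zpow_adj_def by blast
  qed
qed

lemma isolated_eq_one:
  assumes h: "h \<in> carrier G" and isolated: "\<forall>b. \<not> zpow_adj G h b"
  shows "h = \<one>"
proof (rule ccontr)
  assume h1: "h \<noteq> \<one>"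
  have "zpow_arc G h (inv h) \<or> zpow_arc G h \<one>"
  proof (cases "inv h = h")
    case True
    then have "h [^] (2::int) = \<one>"
      using int_pow_mult[OF h, of 1 1] h r_inv[OF h] by simp
    then show ?thesis
      using h h1 unfolding zpow_arc_def by (metis one_closed zero_neq_numeral)
  next
    case False
    then show ?thesis
      using h unfolding zpow_arc_def by (metis int_pow_1 int_pow_neg inv_closed neg_equal_0_iff_equal one_neq_zero)
  qed
  then show False using isolated unfolding zpow_adj_def by blast
qed

end

locale torsion_free_group = group +
  assumes torsion_free: "torsion_free G"
begin

lemma int_pow_eq_iff:
  assumes "a \<in> carrier G" "a \<noteq> \<one>"
  shows "a [^] (m::int) = a [^] n \<longleftrightarrow> m = n"
proof -
  have "ord a = 0" using assms torsion_free ord_eq_0 unfolding torsion_free_def by blast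
  then show ?thesis using int_pow_eq[OF assms(1)] by auto
qed

lemma proper_power_iff: "proper_power G a b \<longleftrightarrow> zpow_arc G a b \<and> b \<noteq> inv a"
proof
  assume "proper_power G a b"
  then obtain n :: int where a: "a \<in> carrier G" "a \<noteq> \<one>" and n: "\<bar>n\<bar> \<ge> 2" "b = a [^] n"
    unfolding proper_power_def by blast
  have "a [^] n \<noteq> a [^] (1::int)" "a [^] n \<noteq> a [^] (-1::int)"
    using n int_pow_eq_iff[OF a] by auto
  then show "zpow_arc G a b \<and> b \<noteq> inv a"
    using a n unfolding zpow_arc_def by (auto simp: int_pow_neg intro!: exI[of _ n])
next
  assume "zpow_arc G a b \<and> b \<noteq> inv a"
  then obtain n :: int where "a \<in> carrier G" "a \<noteq> b" "b \<noteq> inv a" "n \<noteq> 0" "b = a [^] n"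
    unfolding zpow_arc_def by blast
  moreover from this have "n \<noteq> 1" "n \<noteq> -1" by (auto simp: int_pow_neg)
  ultimately show "proper_power G a b"
    unfolding proper_power_def by (auto intro!: exI[of _ n])
qed

lemma O_set_eq: "O_set G z = {t. proper_power G z t}"
  unfolding O_set_def proper_power_iff zpow_arc_def by blast

lemma proper_powerD:
  assumes "proper_power G a b"
  shows "a \<in> carrier G" "b \<in> carrier G" "zpow_adj G a b"
  using assms unfolding proper_power_iff zpow_adj_def zpow_arc_def by auto

lemma zpow_adj_proper_power_cases:
  assumes "zpow_adj G a b" "closed_nbhd G a \<noteq> closed_nbhd G b"
  shows "proper_power G a b \<or> proper_power G b a"
proof -
  have "a \<in> carrier G" "b \<in> carrier G"
    using assms(1) unfolding zpow_adj_def zpow_arc_def by auto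
  then have "b \<noteq> inv a" "a \<noteq> inv b"
    using assms(2) closed_nbhd_inv by auto
  then show ?thesis
    using assms(1) unfolding zpow_adj_def proper_power_iff by blast
qed

lemma int_pow_mem_closed_nbhd_iff:
  fixes i m :: int
  assumes a: "a \<in> carrier G" "a \<noteq> \<one>" and "i \<noteq> 0" "m \<noteq> 0"
  shows "a [^] m \<in> closed_nbhd G (a [^] i) \<longleftrightarrow> i dvd m \<or> m dvd i"
proof -
  have arc_iff: "zpow_arc G (a [^] p) (a [^] q) \<longleftrightarrow> p \<noteq> q \<and> p dvd q"
    if "p \<noteq> 0" "q \<noteq> 0" for p q :: int
  proof -
    have "(\<exists>k::int. k \<noteq> 0 \<and> a [^] q = (a [^] p) [^] k) \<longleftrightarrow> (\<exists>k. k \<noteq> 0 \<and> q = p * k)"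
      using a by (simp add: int_pow_pow int_pow_eq_iff)
    also have "\<dots> \<longleftrightarrow> p dvd q" using that unfolding dvd_def by auto
    finally show ?thesis
      using a int_pow_eq_iff[OF a] unfolding zpow_arc_def by auto
  qed
  show ?thesis
    using arc_iff[of i m] arc_iff[of m i] int_pow_eq_iff[OF a] assms(3,4)
    unfolding closed_nbhd_def zpow_adj_def by auto
qed

lemma int_pow_succ_mem_closed_nbhd_diff:
  fixes i c :: int
  assumes a: "a \<in> carrier G" "a \<noteq> \<one>" and i: "\<bar>i\<bar> \<ge> 2" "i dvd c" "\<bar>i\<bar> \<le> c"
  shows "a [^] (c + 1) \<in> closed_nbhd G a - closed_nbhd G (a [^] i)"
proof -
  have "\<not> i dvd c + 1"
  proof
    assume "i dvd c + 1"
    then have "i dvd 1" using i(2) by (metis add_diff_cancel_left' dvd_diff)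
    then show False using i(1) by simp
  qed
  moreover have "\<not> c + 1 dvd i"
  proof
    assume "c + 1 dvd i"
    moreover have "i \<noteq> 0" using i(1) by auto
    ultimately have "\<bar>c + 1\<bar> \<le> \<bar>i\<bar>" by (rule dvd_imp_le_int[rotated])
    then show False using i(3) by linarith
  qed
  moreover have "a [^] (c + 1) \<in> closed_nbhd G (a [^] (1::int))"
    using int_pow_mem_closed_nbhd_iff[OF a, of 1 "c + 1"] i by auto
  ultimately show ?thesis
    using int_pow_mem_closed_nbhd_iff[OF a, of i "c + 1"] a i by auto
qed

lemma closed_nbhd_not_subset_Un:
  assumes "proper_power G a b" "proper_power G a c"
  shows "\<not> closed_nbhd G a \<subseteq> closed_nbhd G b \<union> closed_nbhd G c"
proof -
  obtain i j :: int where a: "a \<in> carrier G" "a \<noteq> \<one>"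
    and i: "\<bar>i\<bar> \<ge> 2" "b = a [^] i" and j: "\<bar>j\<bar> \<ge> 2" "c = a [^] j"
    using assms unfolding proper_power_def by blast
  have "\<bar>i\<bar> \<le> \<bar>i * j\<bar>" "\<bar>j\<bar> \<le> \<bar>i * j\<bar>"
    using i j by (simp_all add: abs_mult mult_le_cancel_left1 mult_le_cancel_right1)
  then show ?thesis
    using int_pow_succ_mem_closed_nbhd_diff[OF a i(1), of "\<bar>i * j\<bar>"]
      int_pow_succ_mem_closed_nbhd_diff[OF a j(1), of "\<bar>i * j\<bar>"] i j by auto
qed

lemma closed_nbhd_subset_Un:
  "proper_power G a b \<Longrightarrow> proper_power G b c \<Longrightarrow> closed_nbhd G b \<subseteq> closed_nbhd G a \<union> closed_nbhd G c"
  using closed_nbhd_subset_Un_of_zpow_arcs by (simp add: proper_power_iff)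

lemma finite_closed_nbhd_O_set_diff:
  assumes "proper_power G w p" "proper_power G q p"
  shows "finite (closed_nbhd G p \<inter> O_set G w - closed_nbhd G q)"
proof -
  obtain c :: int where w: "w \<in> carrier G" "w \<noteq> \<one>" and c: "\<bar>c\<bar> \<ge> 2" "p = w [^] c"
    using assms(1) unfolding proper_power_def by blast
  have "closed_nbhd G p \<inter> O_set G w - closed_nbhd G q \<subseteq> (\<lambda>d. w [^] d) ` {d. d dvd c}"
  proof
    fix e assume e: "e \<in> closed_nbhd G p \<inter> O_set G w - closed_nbhd G q"
    then obtain k :: int where k: "e = w [^] k"
      unfolding O_set_eq proper_power_def by blast
    from e consider "e = p" | "zpow_arc G p e" | "zpow_arc G e p"
      unfolding closed_nbhd_def zpow_adj_def by blast
    then show "e \<in> (\<lambda>d. w [^] d) ` {d. d dvd c}"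
    proof cases
      case 1
      then show ?thesis using c by auto
    next
      case 2
      then have "e \<in> closed_nbhd G q"
        using zpow_arc_trans_closed_nbhd assms(2) proper_power_iff by blast
      then show ?thesis using e by blast
    next
      case 3
      then obtain j :: int where "p = e [^] j" unfolding zpow_arc_def by blast
      then have "c = k * j" using c k w by (simp add: int_pow_pow int_pow_eq_iff)
      then show ?thesis using k by auto
    qed
  qed
  moreover have "finite {d. d dvd c}" using c by simp
  ultimately show ?thesis by (meson finite_imageI finite_subset)
qed

lemma infinite_closed_nbhd_O_set_diff:
  assumes "proper_power G z x" "proper_power G x y"
  shows "infinite (closed_nbhd G x \<inter> O_set G z - closed_nbhd G y)"
proof -
  obtain a :: int where z: "z \<in> carrier G" "z \<noteq> \<one>" and a: "\<bar>a\<bar> \<ge> 2" "x = z [^] a"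
    using assms(1) unfolding proper_power_def by blast
  obtain n :: int where x: "x \<in> carrier G" "x \<noteq> \<one>" and n: "\<bar>n\<bar> \<ge> 2" "y = x [^] n"
    using assms(2) unfolding proper_power_def by blast
  define f where "f k = x [^] (\<bar>n\<bar> * (int k + 1) + 1)" for k :: nat
  have "f k \<in> closed_nbhd G x \<inter> O_set G z - closed_nbhd G y" for k
  proof -
    have "\<bar>n\<bar> \<le> \<bar>n\<bar> * (int k + 1)" using n by (simp add: mult_le_cancel_left1)
    then have "f k \<in> closed_nbhd G x - closed_nbhd G y"
      using int_pow_succ_mem_closed_nbhd_diff[OF x n(1)] n unfolding f_def by simp
    moreover have "proper_power G z (f k)"
    proof -
      have "f k = z [^] (a * (\<bar>n\<bar> * (int k + 1) + 1))"
        using z a unfolding f_def by (simp add: int_pow_pow)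
      moreover have "\<bar>a\<bar> \<le> \<bar>a * (\<bar>n\<bar> * (int k + 1) + 1)\<bar>"
        using n by (simp add: abs_mult mult_le_cancel_left1)
      ultimately show ?thesis
        using z a unfolding proper_power_def by (metis order.trans)
    qed
    ultimately show ?thesis unfolding O_set_eq by blast
  qed
  moreover have "inj f"
  proof (rule injI)
    fix k l assume "f k = f l"
    then have "\<bar>n\<bar> * (int k + 1) = \<bar>n\<bar> * (int l + 1)"
      unfolding f_def using int_pow_eq_iff[OF x] by simp
    then show "k = l" using n by auto
  qed
  ultimately have "range f \<subseteq> closed_nbhd G x \<inter> O_set G z - closed_nbhd G y" "infinite (range f)"
    using finite_imageD by auto
  then show ?thesis using finite_subset by blast
qed

end

lemma zpow_graph_isoD:
  assumes "zpow_graph_iso G H \<phi>"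
  shows "inj_on \<phi> (carrier G)" "\<phi> ` carrier G = carrier H"
    "\<And>u v. u \<in> carrier G \<Longrightarrow> v \<in> carrier G \<Longrightarrow> zpow_adj H (\<phi> u) (\<phi> v) \<longleftrightarrow> zpow_adj G u v"
  using assms unfolding zpow_graph_iso_def bij_betw_def by auto

lemma zpow_graph_iso_inv_into:
  assumes iso: "zpow_graph_iso G H \<phi>"
  shows "zpow_graph_iso H G (inv_into (carrier G) \<phi>)"
proof -
  let ?\<psi> = "inv_into (carrier G) \<phi>"
  have "zpow_adj G (?\<psi> u) (?\<psi> v) \<longleftrightarrow> zpow_adj H u v" if "u \<in> carrier H" "v \<in> carrier H" for u v
    using zpow_graph_isoD[OF iso] that
    by (metis f_inv_into_f inv_into_into)
  then show ?thesis
    using iso bij_betw_inv_into unfolding zpow_graph_iso_def by blast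
qed

lemma zpow_graph_iso_mem_closed_nbhd_iff:
  assumes iso: "zpow_graph_iso G H \<phi>" and "a \<in> carrier G" "d \<in> carrier G"
  shows "\<phi> d \<in> closed_nbhd H (\<phi> a) \<longleftrightarrow> d \<in> closed_nbhd G a"
proof -
  have "\<phi> d = \<phi> a \<longleftrightarrow> d = a"
    using zpow_graph_isoD(1)[OF iso] assms(2,3) by (auto dest: inj_onD)
  then show ?thesis
    using zpow_graph_isoD(3)[OF iso assms(2,3)] unfolding closed_nbhd_def by auto
qed

lemma zpow_graph_iso_image_closed_nbhd:
  assumes iso: "zpow_graph_iso G H \<phi>" and a: "a \<in> carrier G"
  shows "\<phi> ` closed_nbhd G a = closed_nbhd H (\<phi> a)"
proof
  show "\<phi> ` closed_nbhd G a \<subseteq> closed_nbhd H (\<phi> a)"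
    using zpow_graph_iso_mem_closed_nbhd_iff[OF iso a] closed_nbhd_subset_carrier[OF a] by blast
next
  show "closed_nbhd H (\<phi> a) \<subseteq> \<phi> ` closed_nbhd G a"
  proof
    fix e assume e: "e \<in> closed_nbhd H (\<phi> a)"
    have "\<phi> a \<in> carrier H" using zpow_graph_isoD(2)[OF iso] a by blast
    then have "e \<in> \<phi> ` carrier G"
      using e closed_nbhd_subset_carrier zpow_graph_isoD(2)[OF iso] by (metis subsetD)
    then obtain d where "d \<in> carrier G" "e = \<phi> d" by blast
    then show "e \<in> \<phi> ` closed_nbhd G a"
      using e zpow_graph_iso_mem_closed_nbhd_iff[OF iso a] by blast
  qed
qed

lemma zpow_graph_iso_closed_nbhd_subset_Un_iff:
  assumes iso: "zpow_graph_iso G H \<phi>" and "a \<in> carrier G" "b \<in> carrier G" "c \<in> carrier G"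
  shows "closed_nbhd H (\<phi> b) \<subseteq> closed_nbhd H (\<phi> a) \<union> closed_nbhd H (\<phi> c) \<longleftrightarrow>
    closed_nbhd G b \<subseteq> closed_nbhd G a \<union> closed_nbhd G c"
proof -
  have sub: "closed_nbhd G b \<subseteq> carrier G" "closed_nbhd G a \<union> closed_nbhd G c \<subseteq> carrier G"
    using closed_nbhd_subset_carrier[OF assms(2)] closed_nbhd_subset_carrier[OF assms(3)]
      closed_nbhd_subset_carrier[OF assms(4)] by auto
  have "\<phi> ` closed_nbhd G b \<subseteq> \<phi> ` (closed_nbhd G a \<union> closed_nbhd G c) \<longleftrightarrow>
      closed_nbhd G b \<subseteq> closed_nbhd G a \<union> closed_nbhd G c"
    using inj_on_image_mem_iff[OF zpow_graph_isoD(1)[OF iso] _ sub(2)] sub(1) by blast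
  then show ?thesis
    using zpow_graph_iso_image_closed_nbhd[OF iso] assms(2-4) by (simp add: image_Un)
qed

lemma zpow_graph_iso_torsion_free:
  assumes "group G" "group H" and iso: "zpow_graph_iso G H \<phi>" and "torsion_free G"
  shows "torsion_free H"
proof -
  interpret G: group G by fact
  interpret H: group H by fact
  have isolated: "\<not> zpow_adj H (\<phi> \<one>\<^bsub>G\<^esub>) b" for b
  proof
    assume adj: "zpow_adj H (\<phi> \<one>\<^bsub>G\<^esub>) b"
    then have "b \<in> \<phi> ` carrier G"
      using zpow_graph_isoD(2)[OF iso] unfolding zpow_adj_def zpow_arc_def by auto
    then show False
      using adj zpow_graph_isoD(3)[OF iso] G.torsion_free_iff_one_isolated assms(4) by auto
  qed
  moreover have "\<phi> \<one>\<^bsub>G\<^esub> \<in> carrier H" using zpow_graph_isoD(2)[OF iso] by blast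
  ultimately have "\<phi> \<one>\<^bsub>G\<^esub> = \<one>\<^bsub>H\<^esub>" using H.isolated_eq_one by blast
  then show ?thesis using H.torsion_free_iff_one_isolated isolated by simp
qed

locale torsion_free_zpow_graph_iso =
  G: torsion_free_group G + H: torsion_free_group H
  for G :: "('a, 'b) monoid_scheme" and H :: "('c, 'd) monoid_scheme" +
  fixes \<phi> :: "'a \<Rightarrow> 'c"
  assumes iso: "zpow_graph_iso G H \<phi>"
begin

lemma image_closed_nbhd_neq:
  assumes "proper_power G a b"
  shows "closed_nbhd H (\<phi> a) \<noteq> closed_nbhd H (\<phi> b)"
  using zpow_graph_iso_closed_nbhd_subset_Un_iff[OF iso, of b a b] G.closed_nbhd_not_subset_Un[OF assms assms]
    G.proper_powerD[OF assms] by auto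

lemma image_proper_power_cases:
  assumes "proper_power G a b"
  shows "proper_power H (\<phi> a) (\<phi> b) \<or> proper_power H (\<phi> b) (\<phi> a)"
  using H.zpow_adj_proper_power_cases image_closed_nbhd_neq[OF assms]
    zpow_graph_isoD(3)[OF iso] G.proper_powerD[OF assms] by blast

lemma zpow_arc_image_iff:
  assumes "proper_power G a b"
  shows "zpow_arc H (\<phi> a) (\<phi> b) \<longleftrightarrow> proper_power H (\<phi> a) (\<phi> b)"
proof -
  have "\<phi> a \<in> carrier H" using zpow_graph_isoD(2)[OF iso] G.proper_powerD(1)[OF assms] by blast
  then have "\<phi> b \<noteq> inv\<^bsub>H\<^esub> (\<phi> a)"
    using image_closed_nbhd_neq[OF assms] H.closed_nbhd_inv by auto
  then show ?thesis using H.proper_power_iff by blast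
qed

lemma image_proper_power_of_common_root:
  assumes "proper_power G z a" "proper_power G z b" "proper_power H (\<phi> z) (\<phi> a)"
  shows "proper_power H (\<phi> z) (\<phi> b)"
proof (rule ccontr)
  assume "\<not> proper_power H (\<phi> z) (\<phi> b)"
  then have "proper_power H (\<phi> b) (\<phi> z)" using image_proper_power_cases[OF assms(2)] by blast
  then have "closed_nbhd H (\<phi> z) \<subseteq> closed_nbhd H (\<phi> b) \<union> closed_nbhd H (\<phi> a)"
    using H.closed_nbhd_subset_Un assms(3) by blast
  then have "closed_nbhd G z \<subseteq> closed_nbhd G b \<union> closed_nbhd G a"
    using zpow_graph_iso_closed_nbhd_subset_Un_iff[OF iso] G.proper_powerD assms(1,2) by blast
  then show False using G.closed_nbhd_not_subset_Un[OF assms(2,1)] by blast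
qed

lemma image_proper_power_of_chain:
  assumes "proper_power G z x" "proper_power G x y" "proper_power H (\<phi> x) (\<phi> y)"
  shows "proper_power H (\<phi> z) (\<phi> x)"
proof (rule ccontr)
  assume "\<not> proper_power H (\<phi> z) (\<phi> x)"
  then have "proper_power H (\<phi> x) (\<phi> z)" using image_proper_power_cases[OF assms(1)] by blast
  then have "\<not> closed_nbhd H (\<phi> x) \<subseteq> closed_nbhd H (\<phi> z) \<union> closed_nbhd H (\<phi> y)"
    using H.closed_nbhd_not_subset_Un assms(3) by blast
  then have "\<not> closed_nbhd G x \<subseteq> closed_nbhd G z \<union> closed_nbhd G y"
    using zpow_graph_iso_closed_nbhd_subset_Un_iff[OF iso] G.proper_powerD assms(1,2) by blast
  then show False using G.closed_nbhd_subset_Un[OF assms(1,2)] by blast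
qed

lemma inv_into_iso: "torsion_free_zpow_graph_iso H G (inv_into (carrier G) \<phi>)"
  using zpow_graph_iso_inv_into[OF iso]
  by (simp add: torsion_free_zpow_graph_iso_def torsion_free_zpow_graph_iso_axioms_def
      G.torsion_free_group_axioms H.torsion_free_group_axioms)

lemma image_O_set_eq:
  assumes "proper_power G z x" "proper_power H (\<phi> z) (\<phi> x)"
  shows "\<phi> ` O_set G z = O_set H (\<phi> z)"
proof
  show "\<phi> ` O_set G z \<subseteq> O_set H (\<phi> z)"
    using image_proper_power_of_common_root[OF assms(1) _ assms(2)]
    unfolding G.O_set_eq H.O_set_eq by blast
next
  show "O_set H (\<phi> z) \<subseteq> \<phi> ` O_set G z"
  proof
    fix s assume "s \<in> O_set H (\<phi> z)"
    then have s: "proper_power H (\<phi> z) s" unfolding H.O_set_eq by blast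
    interpret inv: torsion_free_zpow_graph_iso H G "inv_into (carrier G) \<phi>"
      by (rule inv_into_iso)
    have inv_\<phi>: "inv_into (carrier G) \<phi> (\<phi> a) = a" if "a \<in> carrier G" for a
      using zpow_graph_isoD(1)[OF iso] that by simp
    have "s \<in> \<phi> ` carrier G" using zpow_graph_isoD(2)[OF iso] H.proper_powerD(2)[OF s] by blast
    moreover have "proper_power G z (inv_into (carrier G) \<phi> s)"
      using inv.image_proper_power_of_common_root[OF assms(2) s] assms(1) G.proper_powerD[OF assms(1)]
        inv_\<phi> by simp
    ultimately show "s \<in> \<phi> ` O_set G z"
      unfolding G.O_set_eq by (metis f_inv_into_f image_eqI mem_Collect_eq)
  qed
qed

lemma proper_power_if_image_O_set_eq:
  assumes zx: "proper_power G z x" and xy: "proper_power G x y"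
    and eq: "\<phi> ` O_set G z = O_set H (\<phi> z)"
  shows "proper_power H (\<phi> x) (\<phi> y)"
proof (rule ccontr)
  assume "\<not> proper_power H (\<phi> x) (\<phi> y)"
  then have yx: "proper_power H (\<phi> y) (\<phi> x)" using image_proper_power_cases[OF xy] by blast
  have "\<phi> x \<in> O_set H (\<phi> z)" using eq zx unfolding G.O_set_eq by blast
  then have fin: "finite (closed_nbhd H (\<phi> x) \<inter> O_set H (\<phi> z) - closed_nbhd H (\<phi> y))"
    using H.finite_closed_nbhd_O_set_diff[OF _ yx] unfolding H.O_set_eq by blast
  define S where "S = closed_nbhd G x \<inter> O_set G z - closed_nbhd G y"
  have sub: "closed_nbhd G x \<subseteq> carrier G" "O_set G z \<subseteq> carrier G" "closed_nbhd G y \<subseteq> carrier G"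
    using closed_nbhd_subset_carrier[OF G.proper_powerD(1)[OF xy]]
      closed_nbhd_subset_carrier[OF G.proper_powerD(2)[OF xy]] unfolding O_set_def by auto
  have inj: "inj_on \<phi> (carrier G)" using zpow_graph_isoD(1)[OF iso] .
  have "\<phi> ` S = \<phi> ` (closed_nbhd G x \<inter> O_set G z) - \<phi> ` closed_nbhd G y"
    unfolding S_def by (rule inj_on_image_set_diff[OF inj]) (use sub in auto)
  also have "\<phi> ` (closed_nbhd G x \<inter> O_set G z) = \<phi> ` closed_nbhd G x \<inter> \<phi> ` O_set G z"
    by (rule inj_on_image_Int[OF inj sub(1,2)])
  finally have "\<phi> ` S = closed_nbhd H (\<phi> x) \<inter> O_set H (\<phi> z) - closed_nbhd H (\<phi> y)"
    using eq zpow_graph_iso_image_closed_nbhd[OF iso] G.proper_powerD[OF xy] by simp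
  moreover have "S \<subseteq> carrier G" using sub unfolding S_def by auto
  ultimately have "finite S"
    using fin finite_image_iff[OF inj_on_subset[OF inj]] by metis
  then show False using G.infinite_closed_nbhd_O_set_diff[OF zx xy] unfolding S_def by blast
qed

end

theorem mainTheorem8:
  fixes G :: "('a, 'b) monoid_scheme" and H :: "('c, 'd) monoid_scheme"
    and \<phi> :: "'a \<Rightarrow> 'c" and x y z :: 'a
  assumes "group G" and "torsion_free G"
    and "z \<in> carrier G"
    and "x \<in> O_set G z" and "y \<in> O_set G z"
    and "zpow_arc G x y"
    and "y \<notin> {x, inv\<^bsub>G\<^esub> x}"
    and "group H"
    and "zpow_graph_iso G H \<phi>"
  shows "zpow_arc H (\<phi> x) (\<phi> y) \<longleftrightarrow> \<phi> ` O_set G z = O_set H (\<phi> z)"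
proof -
  interpret torsion_free_zpow_graph_iso G H \<phi>
    using assms zpow_graph_iso_torsion_free
    by (simp add: torsion_free_zpow_graph_iso_def torsion_free_zpow_graph_iso_axioms_def
        torsion_free_group_def torsion_free_group_axioms_def)
  \<comment> \<open>The hypotheses \<open>z \<in> carrier G\<close> and \<open>y \<in> O_set G z\<close> follow from the others.\<close>
  have zx: "proper_power G z x" using assms(4) unfolding G.O_set_eq by blast
  have xy: "proper_power G x y" using assms(6,7) G.proper_power_iff by blast
  show ?thesis
    unfolding zpow_arc_image_iff[OF xy]
    using image_O_set_eq[OF zx] image_proper_power_of_chain[OF zx xy]
      proper_power_if_image_O_set_eq[OF zx xy] by blast
qed

end
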